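(* The set of estimable families of processes is closed under addition and multiplication. For every power series $q$ negligible to double factorial, $\mathbb{E}[|q|(\widetilde W^*_T)]<\infty$. Consequently, if $(M_t(x))_{t\le T,x\in\mathbb{R}}$ is estimable, there exist a power series $q$ negligible to double factorial and a constant $C$ such that $\mathbb{E}[|M_t(x)|]\le|q|(|x|)+C$ for all $t\in[0,T]$, $x\in\mathbb{R}$.
   Context: Let $W$ be a Brownian motion, $b\in\mathbb{R}$, $c\ne0$, $T>0$; $\widetilde W_t=c\int_0^te^{b(t-s)}dW_s$, $\widetilde W^*_T=\sup_{s\le T}|\widetilde W_s|$. For a power series $q$, $|q|(x):=\sum_k|q_k|x^k$. A power series is negligible to double factorial if $\limsup_k(|q_k|(k-1)!!)^{1/k}=0$, $(-1)!!=0!!=1$. A family $(M_t(x))_{t\le T,x\in\mathbb{R}}$ is estimable if there is a power series $r$ negligible to double factorial such that for all fixed $t,x$, $|M_t(x)|\le|r|(|x|)+|r|(\widetilde W^*_T)$ a.s. *)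

theory Defs
  imports "HOL-Probability.Probability"
begin

text \<open>Double factorial on naturals; (k-1)!! with the convention (-1)!! = 0!! = 1.\<close>
fun dfact :: "nat \<Rightarrow> nat" where
  "dfact 0 = 1"
| "dfact (Suc 0) = 1"
| "dfact (Suc (Suc n)) = Suc (Suc n) * dfact n"

definition dfact_pred :: "nat \<Rightarrow> nat" where
  "dfact_pred k = (if k = 0 then 1 else dfact (k - 1))"

definition ps_abs :: "(nat \<Rightarrow> real) \<Rightarrow> real \<Rightarrow> real" where
  "ps_abs q x = (\<Sum>k. \<bar>q k\<bar> * x ^ k)"

definition negligible_dfact :: "(nat \<Rightarrow> real) \<Rightarrow> bool" where
  "negligible_dfact q \<longleftrightarrow>
     limsup (\<lambda>k. ereal (root k (\<bar>q k\<bar> * real (dfact_pred k)))) = 0"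

definition brownian_motion :: "'a measure \<Rightarrow> (real \<Rightarrow> 'a \<Rightarrow> real) \<Rightarrow> bool" where
  "brownian_motion M W \<longleftrightarrow>
     prob_space M \<and>
     (\<forall>t. W t \<in> borel_measurable M) \<and>
     (\<forall>\<omega>\<in>space M. W 0 \<omega> = 0 \<and> continuous_on {0..} (\<lambda>t. W t \<omega>)) \<and>
     (\<forall>s t. 0 \<le> s \<and> s < t \<longrightarrow>
        distributed M lborel (\<lambda>\<omega>. W t \<omega> - W s \<omega>) (\<lambda>x. ennreal (normal_density 0 (sqrt (t - s)) x))) \<and>
     (\<forall>(n::nat) (\<tau>::nat \<Rightarrow> real). 0 \<le> \<tau> 0 \<and> (\<forall>i<n. \<tau> i < \<tau> (Suc i)) \<longrightarrow>
        prob_space.indep_vars M (\<lambda>_. borel) (\<lambda>i \<omega>. W (\<tau> (Suc i)) \<omega> - W (\<tau> i) \<omega>) {..<n})"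

text \<open>The Wiener integral c * int_0^t e^{b(t-s)} dW_s, written pathwise via integration by parts:
  int_0^t e^{b(t-s)} dW_s = W_t + b * int_0^t e^{b(t-s)} W_s ds.\<close>
definition OU_proc :: "real \<Rightarrow> real \<Rightarrow> (real \<Rightarrow> 'a \<Rightarrow> real) \<Rightarrow> real \<Rightarrow> 'a \<Rightarrow> real" where
  "OU_proc b c W t \<omega> = c * (W t \<omega> + b * integral {0..t} (\<lambda>s. exp (b * (t - s)) * W s \<omega>))"

definition OU_sup :: "real \<Rightarrow> real \<Rightarrow> (real \<Rightarrow> 'a \<Rightarrow> real) \<Rightarrow> real \<Rightarrow> 'a \<Rightarrow> real" where
  "OU_sup b c W T \<omega> = (SUP s\<in>{0..T}. \<bar>OU_proc b c W s \<omega>\<bar>)"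

definition estimable ::
  "'a measure \<Rightarrow> real \<Rightarrow> real \<Rightarrow> (real \<Rightarrow> 'a \<Rightarrow> real) \<Rightarrow> real \<Rightarrow> (real \<Rightarrow> real \<Rightarrow> 'a \<Rightarrow> real) \<Rightarrow> bool" where
  "estimable M b c W T F \<longleftrightarrow>
     (\<exists>r. negligible_dfact r \<and>
        (\<forall>t\<in>{0..T}. \<forall>x. AE \<omega> in M. \<bar>F t x \<omega>\<bar> \<le> ps_abs r \<bar>x\<bar> + ps_abs r (OU_sup b c W T \<omega>)))"

end

theory Submission
  imports Defs
begin

text \<open>Since \<open>(k-1)!!\<close> lies between \<open>(k div 2)!\<close> and \<open>2^k * (k div 2)!\<close>, a series is
  negligible to double factorial iff \<open>\<bar>q k\<bar> * (k div 2)! \<le> C * e^k\<close> for every \<open>e > 0\<close>. This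
  class is closed under sums and Cauchy squares of \<open>|q|\<close>, and \<open>(a + b) * (c + d)\<close> is
  dominated by \<open>a\<^sup>2 + b\<^sup>2 + c\<^sup>2 + d\<^sup>2\<close>, so estimable families form an algebra.

  For the moment bound, the process is bounded pathwise by a constant \<open>K\<close> times the
  supremum \<open>S\<close> of \<open>|W|\<close> on \<open>[0,T]\<close>. Dyadic chaining bounds \<open>S^(2*m)\<close> by a weighted sum of
  \<open>2*m\<close>-th powers of dyadic increments of \<open>W\<close>, whose expectation is at most
  \<open>7 * (2*T)^m * m!\<close> by the Gaussian moments. With \<open>m = k div 2 + 2\<close> and
  \<open>S^k \<le> 1 + S^(2*m)\<close>, the expectation of \<open>|q|(K * S)\<close> is dominated by
  \<open>\<Sum>k. \<bar>q k\<bar> * K^k * (1 + D^m * m!)\<close>, which converges because \<open>m!\<close> is \<open>(k div 2)!\<close> up to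
  a geometric factor.\<close>

section \<open>Negligible power series\<close>

definition negligible_half_fact :: "(nat \<Rightarrow> real) \<Rightarrow> bool" where
  "negligible_half_fact q \<longleftrightarrow> (\<forall>e>0. \<exists>C. \<forall>k. \<bar>q k\<bar> * fact (k div 2) \<le> C * e ^ k)"

lemma geometric_bound_if_limsup_root_eq_0:
  fixes a :: "nat \<Rightarrow> real"
  assumes nonneg: "\<And>k. 0 \<le> a k" and lim: "limsup (\<lambda>k. ereal (root k (a k))) = 0" and e: "e > 0"
  shows "\<exists>C. \<forall>k. a k \<le> C * e ^ k"
proof -
  have "eventually (\<lambda>k. ereal (root k (a k)) < ereal e) sequentially"
    by (rule Limsup_lessD) (use lim e in simp)
  then obtain N where N: "\<And>k. k \<ge> N \<Longrightarrow> root k (a k) < e"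
    by (auto simp: eventually_sequentially)
  define C where "C = 1 + (\<Sum>k<Suc N. a k / e ^ k)"
  have C1: "1 \<le> C"
    unfolding C_def using nonneg e by (simp add: sum_nonneg)
  have "a k \<le> C * e ^ k" for k
  proof (cases "k \<le> N")
    case True
    have "a k / e ^ k \<le> (\<Sum>k<Suc N. a k / e ^ k)"
      by (rule member_le_sum) (use True nonneg e in auto)
    then have "a k / e ^ k \<le> C" unfolding C_def by linarith
    then show ?thesis using e by (simp add: divide_le_eq mult.commute)
  next
    case False
    then have k: "k > 0" "k \<ge> N" by auto
    have "a k = (root k (a k)) ^ k" using k nonneg by (simp add: real_root_pow_pos2)
    also have "\<dots> \<le> e ^ k" using N[OF k(2)] k nonneg
      by (intro power_mono) (auto simp: real_root_ge_zero)
    also have "\<dots> \<le> C * e ^ k" using C1 e by (simp add: mult_le_cancel_right1)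
    finally show ?thesis .
  qed
  then show ?thesis by blast
qed

lemma root_tendsto_0_if_geometric_bounds:
  fixes a :: "nat \<Rightarrow> real"
  assumes nonneg: "\<And>k. 0 \<le> a k" and bound: "\<And>e. e > 0 \<Longrightarrow> \<exists>C. \<forall>k. a k \<le> C * e ^ k"
  shows "(\<lambda>k. root k (a k)) \<longlonglongrightarrow> 0"
proof (rule tendstoI)
  fix e :: real assume e: "e > 0"
  obtain C0 where C0: "\<And>k. a k \<le> C0 * (e/4) ^ k"
    using bound e by (meson divide_pos_pos zero_less_numeral)
  define C where "C = max C0 1"
  have C: "a k \<le> C * (e/4) ^ k" for k
    using C0[of k] e unfolding C_def by (smt (verit) mult_right_mono zero_le_power divide_nonneg_pos)
  have "(\<lambda>k. root k C) \<longlonglongrightarrow> 1" using C_def by (intro LIMSEQ_root_const) auto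
  then have "eventually (\<lambda>k. dist (root k C) 1 < 1) sequentially"
    by (rule tendstoD) simp
  then have "eventually (\<lambda>k. root k C < 2 \<and> k > 0) sequentially"
    using eventually_gt_at_top[of 0] by eventually_elim (auto simp: dist_real_def)
  then show "eventually (\<lambda>k. dist (root k (a k)) 0 < e) sequentially"
  proof eventually_elim
    case (elim k)
    have "root k (a k) \<le> root k (C * (e/4) ^ k)" using C elim by (simp add: real_root_le_iff)
    also have "\<dots> = root k C * (e/4)"
      unfolding real_root_mult using elim e by (subst real_root_power_cancel) auto
    also have "\<dots> < 2 * (e/4)" using elim e by (intro mult_strict_right_mono) auto
    also have "\<dots> < e" using e by simp
    finally show ?case using nonneg[of k] by (simp add: dist_real_def real_root_ge_zero)
  qed
qed

lemma limsup_root_eq_0_iff: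
  fixes a :: "nat \<Rightarrow> real"
  assumes "\<And>k. 0 \<le> a k"
  shows "limsup (\<lambda>k. ereal (root k (a k))) = 0 \<longleftrightarrow> (\<forall>e>0. \<exists>C. \<forall>k. a k \<le> C * e ^ k)"
proof
  assume "\<forall>e>0. \<exists>C. \<forall>k. a k \<le> C * e ^ k"
  then have "(\<lambda>k. ereal (root k (a k))) \<longlonglongrightarrow> ereal 0"
    using root_tendsto_0_if_geometric_bounds[OF assms] by (simp add: tendsto_ereal)
  then show "limsup (\<lambda>k. ereal (root k (a k))) = 0"
    by (simp add: lim_imp_Limsup zero_ereal_def)
next
  assume "limsup (\<lambda>k. ereal (root k (a k))) = 0"
  then show "\<forall>e>0. \<exists>C. \<forall>k. a k \<le> C * e ^ k"
    by (intro allI impI geometric_bound_if_limsup_root_eq_0[OF assms])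
qed

lemma dfact_bounds: "fact ((n+1) div 2) \<le> dfact n \<and> dfact n \<le> 2^(n+1) * fact ((n+1) div 2)"
proof (induction n rule: dfact.induct)
  case (3 n)
  have half_SS: "(Suc (Suc n) + 1) div 2 = Suc ((n+1) div 2)" by simp
  have fact_SS: "fact ((Suc (Suc n) + 1) div 2) = Suc ((n+1) div 2) * (fact ((n+1) div 2) :: nat)"
    unfolding half_SS by simp
  show ?case
  proof
    have "Suc ((n+1) div 2) \<le> Suc (Suc n)" by simp
    then show "fact ((Suc (Suc n) + 1) div 2) \<le> dfact (Suc (Suc n))"
      unfolding fact_SS dfact.simps using 3 by (intro mult_le_mono) auto
    have "Suc (Suc n) \<le> 4 * Suc ((n+1) div 2)" by simp
    then have "dfact (Suc (Suc n)) \<le> (4 * Suc ((n+1) div 2)) * (2^(n+1) * fact ((n+1) div 2))"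
      unfolding dfact.simps using 3 by (intro mult_le_mono) auto
    also have "\<dots> = 2^(Suc (Suc n)+1) * fact ((Suc (Suc n) + 1) div 2)"
      unfolding fact_SS by (simp add: power_add algebra_simps)
    finally show "dfact (Suc (Suc n)) \<le> 2^(Suc (Suc n)+1) * fact ((Suc (Suc n) + 1) div 2)" .
  qed
qed simp_all

lemma dfact_pred_bounds:
  "(fact (k div 2) :: real) \<le> real (dfact_pred k)"
  "real (dfact_pred k) \<le> 2^k * fact (k div 2)"
proof -
  have bounds: "fact (k div 2) \<le> dfact_pred k \<and> dfact_pred k \<le> 2^k * fact (k div 2)"
  proof (cases k)
    case (Suc n) then show ?thesis using dfact_bounds[of n] by (simp add: dfact_pred_def)
  qed (simp add: dfact_pred_def)
  then show "(fact (k div 2) :: real) \<le> real (dfact_pred k)"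
    by (metis of_nat_fact of_nat_le_iff)
  have "real (dfact_pred k) \<le> real (2^k * fact (k div 2))"
    using bounds by (metis of_nat_le_iff)
  then show "real (dfact_pred k) \<le> 2^k * fact (k div 2)" by simp
qed

lemma negligible_dfact_iff: "negligible_dfact q \<longleftrightarrow> negligible_half_fact q"
proof -
  have "negligible_dfact q \<longleftrightarrow> (\<forall>e>0. \<exists>C. \<forall>k. \<bar>q k\<bar> * real (dfact_pred k) \<le> C * e ^ k)"
    unfolding negligible_dfact_def by (rule limsup_root_eq_0_iff) simp
  also have "\<dots> \<longleftrightarrow> negligible_half_fact q"
    unfolding negligible_half_fact_def
  proof (intro iffI allI impI)
    fix e :: real assume "e > 0" and "\<forall>e>0. \<exists>C. \<forall>k. \<bar>q k\<bar> * real (dfact_pred k) \<le> C * e ^ k"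
    then obtain C where C: "\<And>k. \<bar>q k\<bar> * real (dfact_pred k) \<le> C * e ^ k" by blast
    have "\<bar>q k\<bar> * fact (k div 2) \<le> C * e ^ k" for k
      using C[of k] dfact_pred_bounds(1)[of k] by (smt (verit) abs_ge_zero mult_left_mono)
    then show "\<exists>C. \<forall>k. \<bar>q k\<bar> * fact (k div 2) \<le> C * e ^ k" by blast
  next
    fix e :: real assume e: "e > 0" and "\<forall>e>0. \<exists>C. \<forall>k. \<bar>q k\<bar> * fact (k div 2) \<le> C * e ^ k"
    then obtain C where C: "\<And>k. \<bar>q k\<bar> * fact (k div 2) \<le> C * (e/2) ^ k"
      by (meson half_gt_zero)
    have "\<bar>q k\<bar> * real (dfact_pred k) \<le> C * e ^ k" for k
    proof -
      have "\<bar>q k\<bar> * real (dfact_pred k) \<le> \<bar>q k\<bar> * (2^k * fact (k div 2))"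
        using dfact_pred_bounds(2)[of k] by (simp add: mult_left_mono)
      also have "\<dots> = 2^k * (\<bar>q k\<bar> * fact (k div 2))" by simp
      also have "\<dots> \<le> 2^k * (C * (e/2)^k)" using C[of k] by (simp add: mult_left_mono)
      also have "\<dots> = C * e ^ k" by (simp add: power_divide)
      finally show ?thesis .
    qed
    then show "\<exists>C. \<forall>k. \<bar>q k\<bar> * real (dfact_pred k) \<le> C * e ^ k" by blast
  qed
  finally show ?thesis .
qed

lemma summable_half_fact_weighted:
  assumes q: "negligible_half_fact q" and A: "A \<ge> 0"
  shows "summable (\<lambda>k. \<bar>q k\<bar> * fact (k div 2) * A ^ k)"
proof -
  obtain C where C: "\<And>k. \<bar>q k\<bar> * fact (k div 2) \<le> C * (1/(2*A+1)) ^ k"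
    using q A unfolding negligible_half_fact_def by (metis divide_pos_pos zero_less_one add_nonneg_pos
      mult_nonneg_nonneg zero_le_numeral)
  have C0: "C \<ge> 0" using C[of 0] abs_ge_zero[of "q 0"] by simp
  have bound: "norm (\<bar>q k\<bar> * fact (k div 2) * A ^ k) \<le> C * (1/2) ^ k" for k
  proof -
    have "norm (\<bar>q k\<bar> * fact (k div 2) * A ^ k) \<le> (C * (1/(2*A+1)) ^ k) * A ^ k"
      using C[of k] A by (simp add: mult_right_mono)
    also have "\<dots> = C * (A/(2*A+1)) ^ k" by (simp add: power_divide)
    also have "\<dots> \<le> C * (1/2) ^ k"
      using A C0 by (intro mult_left_mono power_mono) (auto simp: divide_simps)
    finally show ?thesis .
  qed
  show ?thesis
    by (rule summable_comparison_test'[OF summable_mult[OF summable_geometric]])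
       (use bound in auto)
qed

lemma summable_ps_abs:
  assumes "negligible_half_fact q"
  shows "summable (\<lambda>k. \<bar>q k\<bar> * x ^ k)"
proof -
  have bound: "norm (\<bar>q k\<bar> * x ^ k) \<le> \<bar>q k\<bar> * fact (k div 2) * \<bar>x\<bar> ^ k" for k
    using mult_left_mono[OF fact_ge_1[where 'a=real, of "k div 2"], of "\<bar>q k\<bar> * \<bar>x\<bar> ^ k"]
    by (simp add: abs_mult power_abs ac_simps)
  show ?thesis
    by (rule summable_comparison_test'[OF summable_half_fact_weighted[OF assms abs_ge_zero]])
       (use bound in auto)
qed

lemma ps_abs_nonneg: "negligible_half_fact q \<Longrightarrow> 0 \<le> x \<Longrightarrow> 0 \<le> ps_abs q x"
  unfolding ps_abs_def by (intro suminf_nonneg summable_ps_abs) auto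

lemma ps_abs_mono: "negligible_half_fact q \<Longrightarrow> 0 \<le> x \<Longrightarrow> x \<le> y \<Longrightarrow> ps_abs q x \<le> ps_abs q y"
  unfolding ps_abs_def by (intro suminf_le summable_ps_abs) (auto intro!: mult_left_mono power_mono)

lemma negligible_half_fact_abs_add:
  assumes "negligible_half_fact r1" "negligible_half_fact r2"
  shows "negligible_half_fact (\<lambda>k. \<bar>r1 k\<bar> + \<bar>r2 k\<bar>)"
  unfolding negligible_half_fact_def
proof (intro allI impI)
  fix e :: real assume "e > 0"
  then obtain C1 C2 where "\<And>k. \<bar>r1 k\<bar> * fact (k div 2) \<le> C1 * e ^ k"
    and "\<And>k. \<bar>r2 k\<bar> * fact (k div 2) \<le> C2 * e ^ k"
    using assms unfolding negligible_half_fact_def by meson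
  then have "\<bar>\<bar>r1 k\<bar> + \<bar>r2 k\<bar>\<bar> * fact (k div 2) \<le> (C1 + C2) * e ^ k" for k
    by (simp add: add_mono distrib_right)
  then show "\<exists>C. \<forall>k. \<bar>\<bar>r1 k\<bar> + \<bar>r2 k\<bar>\<bar> * fact (k div 2) \<le> C * e ^ k" by blast
qed

lemma ps_abs_abs_add:
  assumes "negligible_half_fact r1" "negligible_half_fact r2"
  shows "ps_abs (\<lambda>k. \<bar>r1 k\<bar> + \<bar>r2 k\<bar>) x = ps_abs r1 x + ps_abs r2 x"
proof -
  have "ps_abs (\<lambda>k. \<bar>r1 k\<bar> + \<bar>r2 k\<bar>) x = (\<Sum>k. \<bar>r1 k\<bar> * x^k + \<bar>r2 k\<bar> * x^k)"
    unfolding ps_abs_def by (simp add: algebra_simps)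
  also have "\<dots> = ps_abs r1 x + ps_abs r2 x"
    unfolding ps_abs_def by (rule suminf_add[symmetric]) (use summable_ps_abs assms in auto)
  finally show ?thesis .
qed

lemma fact_add_le: "(fact (a + b) :: real) \<le> 2 ^ (a + b) * fact a * fact b"
proof -
  have "(fact (a+b) :: real) = fact a * fact b * real ((a+b) choose a)"
    using binomial_fact_lemma[of a "a+b"] by (metis add_diff_cancel_left' le_add1 of_nat_fact of_nat_mult)
  also have "\<dots> \<le> fact a * fact b * 2 ^ (a+b)"
    using binomial_le_pow2[of "a+b" a] by (intro mult_left_mono) (auto simp: of_nat_le_iff[symmetric])
  finally show ?thesis by (simp add: ac_simps)
qed

lemma fact_half_le_mult:
  assumes "i \<le> k"
  shows "(fact (k div 2) :: real) \<le> 2 * 4 ^ k * fact (i div 2) * fact ((k - i) div 2)"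
proof -
  define a where "a = i div 2"
  define b where "b = (k - i) div 2"
  have "k div 2 \<le> a + b + 1" "a + b \<le> k" using assms unfolding a_def b_def by linarith+
  have "(fact (k div 2) :: real) \<le> fact (a + b + 1)"
    using \<open>k div 2 \<le> a + b + 1\<close> by (rule fact_mono)
  also have "\<dots> = real (a + b + 1) * fact (a + b)" by (simp add: algebra_simps)
  also have "\<dots> \<le> 2 ^ (a+b+1) * (2 ^ (a + b) * fact a * fact b)"
  proof (intro mult_mono fact_add_le)
    have "real (a+b+1) < 2 ^ (a+b+1)" by (metis of_nat_less_two_power)
    then show "real (a + b + 1) \<le> 2 ^ (a + b + 1)" by simp
  qed auto
  also have "\<dots> = 2 * 4 ^ (a+b) * fact a * fact b"
    by (simp add: power_add power_mult_distrib[symmetric] mult_ac)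
  also have "\<dots> \<le> 2 * 4 ^ k * fact a * fact b"
    using \<open>a + b \<le> k\<close> by (intro mult_right_mono power_increasing) auto
  finally show ?thesis unfolding a_def b_def .
qed

section \<open>Closure of estimable families under sums and products\<close>

definition cauchy_square :: "(nat \<Rightarrow> real) \<Rightarrow> nat \<Rightarrow> real" where
  "cauchy_square r k = (\<Sum>i\<le>k. \<bar>r i\<bar> * \<bar>r (k - i)\<bar>)"

lemma cauchy_square_nonneg: "0 \<le> cauchy_square r k"
  unfolding cauchy_square_def by (intro sum_nonneg) auto

lemma cauchy_square_half_fact_le:
  assumes C: "\<And>k. \<bar>r k\<bar> * fact (k div 2) \<le> C * d ^ k" and d: "0 \<le> d"
  shows "cauchy_square r k * fact (k div 2) \<le> 2 * C^2 * (real (k+1) * (4*d)^k)"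
proof -
  have C0: "C \<ge> 0" using C[of 0] abs_ge_zero[of "r 0"] by simp
  have term_le: "\<bar>r i\<bar> * \<bar>r (k - i)\<bar> * fact (k div 2) \<le> 2 * 4 ^ k * (C^2 * d^k)" if "i \<le> k" for i
  proof -
    have "\<bar>r i\<bar> * \<bar>r (k - i)\<bar> * fact (k div 2)
        \<le> \<bar>r i\<bar> * \<bar>r (k - i)\<bar> * (2 * 4 ^ k * fact (i div 2) * fact ((k - i) div 2))"
      using fact_half_le_mult[OF that] by (intro mult_left_mono) auto
    also have "\<dots> = 2 * 4 ^ k * ((\<bar>r i\<bar> * fact (i div 2)) * (\<bar>r (k - i)\<bar> * fact ((k - i) div 2)))"
      by (simp only: ac_simps)
    also have "\<dots> \<le> 2 * 4 ^ k * ((C * d ^ i) * (C * d ^ (k - i)))"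
      using C0 d by (intro mult_left_mono mult_mono[OF C[of i] C[of "k - i"]]) auto
    also have "\<dots> = 2 * 4 ^ k * (C^2 * d^k)"
      using that by (simp add: power2_eq_square ac_simps power_add[symmetric])
    finally show ?thesis .
  qed
  have "cauchy_square r k * fact (k div 2) = (\<Sum>i\<le>k. \<bar>r i\<bar> * \<bar>r (k - i)\<bar> * fact (k div 2))"
    unfolding cauchy_square_def sum_distrib_right ..
  also have "\<dots> \<le> (\<Sum>i\<le>k. 2 * 4 ^ k * (C^2 * d^k))"
    using term_le by (intro sum_mono) auto
  also have "\<dots> = 2 * C^2 * (real (k+1) * (4*d)^k)"
    by (simp add: power_mult_distrib)
  finally show ?thesis .
qed

lemma negligible_half_fact_cauchy_square:
  assumes r: "negligible_half_fact r"
  shows "negligible_half_fact (cauchy_square r)"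
  unfolding negligible_half_fact_def
proof (intro allI impI)
  fix e :: real assume e: "e > 0"
  then obtain C where C: "\<And>k. \<bar>r k\<bar> * fact (k div 2) \<le> C * (e/8) ^ k"
    using r unfolding negligible_half_fact_def by (meson divide_pos_pos zero_less_numeral)
  have "\<bar>cauchy_square r k\<bar> * fact (k div 2) \<le> (2 * C^2) * e ^ k" for k
  proof -
    have "\<bar>cauchy_square r k\<bar> * fact (k div 2) \<le> 2 * C^2 * (real (k+1) * (e/2)^k)"
      using cauchy_square_half_fact_le[OF C, of k] e by (simp add: abs_of_nonneg cauchy_square_nonneg)
    also have "\<dots> \<le> 2 * C^2 * e^k"
    proof -
      have "real (k+1) \<le> 2^k"
        by (metis Suc_eq_plus1 Suc_leI of_nat_le_iff of_nat_numeral of_nat_power less_exp)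
      then have "real (k+1) * (e/2)^k \<le> 2^k * (e/2)^k"
        using e by (intro mult_right_mono) auto
      also have "\<dots> = e^k" by (simp add: power_divide)
      finally show ?thesis by (intro mult_left_mono) auto
    qed
    finally show ?thesis by simp
  qed
  then show "\<exists>C. \<forall>k. \<bar>cauchy_square r k\<bar> * fact (k div 2) \<le> C * e ^ k" by blast
qed

lemma ps_abs_cauchy_square:
  assumes "negligible_half_fact r"
  shows "ps_abs (cauchy_square r) x = (ps_abs r x)^2"
proof -
  have s: "summable (\<lambda>k. norm (\<bar>r k\<bar> * x ^ k))"
    using summable_ps_abs[OF assms, of "\<bar>x\<bar>"] by (simp add: abs_mult power_abs)
  have "(\<lambda>k. \<Sum>i\<le>k. (\<bar>r i\<bar> * x ^ i) * (\<bar>r (k - i)\<bar> * x ^ (k - i))) sums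
          ((\<Sum>k. \<bar>r k\<bar> * x ^ k) * (\<Sum>k. \<bar>r k\<bar> * x ^ k))"
    by (rule Cauchy_product_sums[OF s s])
  moreover have "(\<Sum>i\<le>k. (\<bar>r i\<bar> * x ^ i) * (\<bar>r (k - i)\<bar> * x ^ (k - i))) =
      \<bar>cauchy_square r k\<bar> * x ^ k" for k
    unfolding abs_of_nonneg[OF cauchy_square_nonneg]
    unfolding cauchy_square_def sum_distrib_right
    by (intro sum.cong refl) (simp add: power_add[symmetric] ac_simps)
  ultimately show ?thesis
    unfolding ps_abs_def power2_eq_square by (simp add: sums_iff)
qed

lemma abs_mult_le_sum_squares:
  fixes f g u1 v1 u2 v2 :: real
  assumes "\<bar>f\<bar> \<le> u1 + v1" "\<bar>g\<bar> \<le> u2 + v2"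
  shows "\<bar>f * g\<bar> \<le> u1^2 + v1^2 + u2^2 + v2^2"
proof -
  have "\<bar>f * g\<bar> \<le> (u1 + v1) * (u2 + v2)"
    unfolding abs_mult using assms by (intro mult_mono) auto
  moreover have "0 \<le> ((u1 + v1) - (u2 + v2))^2" "0 \<le> (u1 - v1)^2" "0 \<le> (u2 - v2)^2"
    by simp_all
  ultimately show ?thesis by (simp add: power2_eq_square algebra_simps)
qed

lemma estimableI:
  assumes "negligible_half_fact r"
    and "\<And>t x. t \<in> {0..T} \<Longrightarrow>
      AE \<omega> in M. \<bar>F t x \<omega>\<bar> \<le> ps_abs r \<bar>x\<bar> + ps_abs r (OU_sup b c W T \<omega>)"
  shows "estimable M b c W T F"
  using assms unfolding estimable_def negligible_dfact_iff by blast

lemma estimableE: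
  assumes "estimable M b c W T F"
  obtains r where "negligible_half_fact r"
    and "\<And>t x. t \<in> {0..T} \<Longrightarrow>
      AE \<omega> in M. \<bar>F t x \<omega>\<bar> \<le> ps_abs r \<bar>x\<bar> + ps_abs r (OU_sup b c W T \<omega>)"
  using assms unfolding estimable_def negligible_dfact_iff by blast

lemma estimable_add:
  assumes "estimable M b c W T F" "estimable M b c W T G"
  shows "estimable M b c W T (\<lambda>t x \<omega>. F t x \<omega> + G t x \<omega>)"
proof -
  obtain r1 where r1: "negligible_half_fact r1" and F: "\<And>t x. t \<in> {0..T} \<Longrightarrow>
      AE \<omega> in M. \<bar>F t x \<omega>\<bar> \<le> ps_abs r1 \<bar>x\<bar> + ps_abs r1 (OU_sup b c W T \<omega>)"
    using assms(1) by (rule estimableE) blast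
  obtain r2 where r2: "negligible_half_fact r2" and G: "\<And>t x. t \<in> {0..T} \<Longrightarrow>
      AE \<omega> in M. \<bar>G t x \<omega>\<bar> \<le> ps_abs r2 \<bar>x\<bar> + ps_abs r2 (OU_sup b c W T \<omega>)"
    using assms(2) by (rule estimableE) blast
  show ?thesis
  proof (rule estimableI)
    show "negligible_half_fact (\<lambda>k. \<bar>r1 k\<bar> + \<bar>r2 k\<bar>)"
      by (rule negligible_half_fact_abs_add[OF r1 r2])
    show "AE \<omega> in M. \<bar>F t x \<omega> + G t x \<omega>\<bar> \<le> ps_abs (\<lambda>k. \<bar>r1 k\<bar> + \<bar>r2 k\<bar>) \<bar>x\<bar>
        + ps_abs (\<lambda>k. \<bar>r1 k\<bar> + \<bar>r2 k\<bar>) (OU_sup b c W T \<omega>)" if "t \<in> {0..T}" for t x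
      unfolding ps_abs_abs_add[OF r1 r2] using F[OF that, of x] G[OF that, of x]
      by eventually_elim (use abs_triangle_ineq in fastforce)
  qed
qed

lemma estimable_mult:
  assumes "estimable M b c W T F" "estimable M b c W T G"
  shows "estimable M b c W T (\<lambda>t x \<omega>. F t x \<omega> * G t x \<omega>)"
proof -
  obtain r1 where r1: "negligible_half_fact r1" and F: "\<And>t x. t \<in> {0..T} \<Longrightarrow>
      AE \<omega> in M. \<bar>F t x \<omega>\<bar> \<le> ps_abs r1 \<bar>x\<bar> + ps_abs r1 (OU_sup b c W T \<omega>)"
    using assms(1) by (rule estimableE) blast
  obtain r2 where r2: "negligible_half_fact r2" and G: "\<And>t x. t \<in> {0..T} \<Longrightarrow>
      AE \<omega> in M. \<bar>G t x \<omega>\<bar> \<le> ps_abs r2 \<bar>x\<bar> + ps_abs r2 (OU_sup b c W T \<omega>)"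
    using assms(2) by (rule estimableE) blast
  note sq = negligible_half_fact_cauchy_square[OF r1] negligible_half_fact_cauchy_square[OF r2]
  define r where "r k = \<bar>cauchy_square r1 k\<bar> + \<bar>cauchy_square r2 k\<bar>" for k
  have ps_abs_r: "ps_abs r y = (ps_abs r1 y)\<^sup>2 + (ps_abs r2 y)\<^sup>2" for y
    unfolding r_def ps_abs_abs_add[OF sq] ps_abs_cauchy_square[OF r1] ps_abs_cauchy_square[OF r2] ..
  show ?thesis
  proof (rule estimableI)
    show "negligible_half_fact r"
      unfolding r_def by (rule negligible_half_fact_abs_add[OF sq])
    show "AE \<omega> in M. \<bar>F t x \<omega> * G t x \<omega>\<bar> \<le> ps_abs r \<bar>x\<bar> + ps_abs r (OU_sup b c W T \<omega>)"
      if "t \<in> {0..T}" for t x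
      unfolding ps_abs_r using F[OF that, of x] G[OF that, of x]
      by eventually_elim (drule (1) abs_mult_le_sum_squares, simp)
  qed
qed

section \<open>Pathwise estimates and dyadic chaining\<close>

lemma abs_OU_path_le:
  fixes f :: "real \<Rightarrow> real"
  assumes cont: "continuous_on {0..t} f" and t: "0 \<le> t" "t \<le> T"
    and bound: "\<And>s. s \<in> {0..t} \<Longrightarrow> \<bar>f s\<bar> \<le> B"
  shows "\<bar>c * (f t + b * integral {0..t} (\<lambda>s. exp (b*(t-s)) * f s))\<bar>
    \<le> \<bar>c\<bar> * (1 + \<bar>b\<bar>*T*exp(\<bar>b\<bar>*T)) * B"
proof -
  have B0: "0 \<le> B" using bound[of 0] t by auto
  have integrand_le: "norm (exp (b*(t-s)) * f s) \<le> exp(\<bar>b\<bar>*T) * B" if s: "s \<in> {0..t}" for s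
  proof -
    have "b*(t-s) \<le> \<bar>b\<bar>*(t-s)" using s by (intro mult_right_mono) auto
    also have "\<dots> \<le> \<bar>b\<bar>*T" using s t by (intro mult_left_mono) auto
    finally have "exp (b*(t-s)) \<le> exp(\<bar>b\<bar>*T)" by simp
    with bound[OF s] show ?thesis by (simp add: abs_mult mult_mono)
  qed
  have "continuous_on {0..t} (\<lambda>s. exp (b*(t-s)) * f s)"
    by (intro continuous_intros cont)
  then have "norm (integral {0..t} (\<lambda>s. exp (b*(t-s)) * f s)) \<le> exp(\<bar>b\<bar>*T) * B * (t - 0)"
    using t(1) integrand_le by (intro integral_bound) auto
  also have "\<dots> \<le> exp(\<bar>b\<bar>*T) * B * T" using t B0 by (intro mult_left_mono) auto
  finally have integral_le: "\<bar>integral {0..t} (\<lambda>s. exp (b*(t-s)) * f s)\<bar> \<le> exp(\<bar>b\<bar>*T) * B * T"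
    by simp
  have "\<bar>f t + b * integral {0..t} (\<lambda>s. exp (b*(t-s)) * f s)\<bar>
      \<le> \<bar>f t\<bar> + \<bar>b\<bar> * \<bar>integral {0..t} (\<lambda>s. exp (b*(t-s)) * f s)\<bar>"
    by (simp add: abs_mult[symmetric] abs_triangle_ineq)
  also have "\<dots> \<le> B + \<bar>b\<bar> * (exp(\<bar>b\<bar>*T) * B * T)"
    using bound t integral_le by (intro add_mono mult_left_mono) auto
  also have "\<dots> = (1 + \<bar>b\<bar>*T*exp(\<bar>b\<bar>*T)) * B" by (simp add: algebra_simps)
  finally show ?thesis
    by (simp add: abs_mult mult.assoc mult_left_mono)
qed

lemma abs_le_SUP_abs:
  fixes f :: "real \<Rightarrow> real"
  assumes "continuous_on {0..T} f" "s \<in> {0..T}"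
  shows "\<bar>f s\<bar> \<le> (SUP s\<in>{0..T}. \<bar>f s\<bar>)"
proof (rule cSUP_upper[OF assms(2)])
  have "compact ((\<lambda>s. \<bar>f s\<bar>) ` {0..T})"
    by (intro compact_continuous_image continuous_intros assms(1)) auto
  then show "bdd_above ((\<lambda>s. \<bar>f s\<bar>) ` {0..T})"
    by (intro bounded_imp_bdd_above compact_imp_bounded)
qed

lemma SUP_abs_nonneg:
  fixes f :: "real \<Rightarrow> real"
  assumes "continuous_on {0..T} f" "0 \<le> T"
  shows "0 \<le> (SUP s\<in>{0..T}. \<bar>f s\<bar>)"
  using abs_le_SUP_abs[OF assms(1), of 0] assms(2) by (meson abs_ge_zero atLeastAtMost_iff order.trans order_refl)

lemma OU_sup_bounds:
  assumes paths: "continuous_on {0..T} (\<lambda>t. W t \<omega>)" and T: "0 \<le> T"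
  shows "0 \<le> OU_sup b c W T \<omega>"
    and "OU_sup b c W T \<omega> \<le> \<bar>c\<bar> * (1 + \<bar>b\<bar>*T*exp(\<bar>b\<bar>*T)) * (SUP s\<in>{0..T}. \<bar>W s \<omega>\<bar>)"
proof -
  define K where "K = \<bar>c\<bar> * (1 + \<bar>b\<bar>*T*exp(\<bar>b\<bar>*T)) * (SUP s\<in>{0..T}. \<bar>W s \<omega>\<bar>)"
  have OU_le: "\<bar>OU_proc b c W t \<omega>\<bar> \<le> K" if t: "t \<in> {0..T}" for t
    unfolding OU_proc_def K_def using t
    by (intro abs_OU_path_le continuous_on_subset[OF paths] abs_le_SUP_abs[OF paths]) auto
  have "bdd_above ((\<lambda>s. \<bar>OU_proc b c W s \<omega>\<bar>) ` {0..T})"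
    using OU_le by (auto intro!: bdd_aboveI2[where M=K])
  then have "\<bar>OU_proc b c W 0 \<omega>\<bar> \<le> OU_sup b c W T \<omega>"
    unfolding OU_sup_def by (rule cSUP_upper[rotated]) (use T in auto)
  then show "0 \<le> OU_sup b c W T \<omega>" by (meson abs_ge_zero order.trans)
  show "OU_sup b c W T \<omega> \<le> K"
    unfolding OU_sup_def by (rule cSUP_least) (use T OU_le in auto)
qed

lemma dyadic_chaining:
  fixes f :: "real \<Rightarrow> real"
  assumes f0: "f 0 = 0" and a: "0 \<le> a" and \<beta>: "0 \<le> \<beta>"
    and incr: "\<And>N j. j < 2^N \<Longrightarrow> \<bar>f (real (Suc j) * T / 2^N) - f (real j * T / 2^N)\<bar> \<le> \<beta>^N * a"
  shows "m \<le> 2^n \<Longrightarrow> \<bar>f (real m * T / 2^n)\<bar> \<le> a * (\<Sum>N\<le>n. \<beta>^N)"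
proof (induction n arbitrary: m)
  case 0
  then have "m = 0 \<or> m = 1" by auto
  then show ?case using f0 a incr[of 0 0] by auto
next
  case (Suc n)
  define m' where "m' = m div 2"
  have IH: "\<bar>f (real m' * T / 2^n)\<bar> \<le> a * (\<Sum>N\<le>n. \<beta>^N)"
    using Suc unfolding m'_def by auto
  have sum_Suc: "a * (\<Sum>N\<le>Suc n. \<beta>^N) = \<beta>^Suc n * a + a * (\<Sum>N\<le>n. \<beta>^N)"
    by (simp add: algebra_simps)
  have halve: "real (2*m') * T / 2^Suc n = real m' * T / 2^n" by (simp add: field_simps)
  show ?case
  proof (cases "even m")
    case True
    then have "m = 2*m'" unfolding m'_def by simp
    then show ?thesis using IH halve sum_Suc a \<beta> by (simp add: add_increasing)
  next
    case False
    then have m: "m = Suc (2*m')" unfolding m'_def by presburger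
    have "\<bar>f (real m * T / 2^Suc n)\<bar>
        \<le> \<bar>f (real (Suc (2*m')) * T / 2^Suc n) - f (real (2*m') * T / 2^Suc n)\<bar>
           + \<bar>f (real (2*m') * T / 2^Suc n)\<bar>" unfolding m by arith
    also have "\<dots> \<le> \<beta>^Suc n * a + a * (\<Sum>N\<le>n. \<beta>^N)"
      using incr[of "2*m'" "Suc n"] Suc.prems m IH halve by (intro add_mono) auto
    finally show ?thesis using sum_Suc by simp
  qed
qed

lemma dyadic_approximation:
  assumes T: "0 < T" and s: "s \<in> {0..T}"
  obtains m :: "nat \<Rightarrow> nat" where "\<And>n. m n \<le> 2^n" "(\<lambda>n. real (m n) * T / 2^n) \<longlonglongrightarrow> s"
proof -
  define m where "m n = nat \<lfloor>s * 2^n / T\<rfloor>" for n :: nat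
  have m: "real (m n) \<le> s * 2^n / T" "s * 2^n / T - 1 \<le> real (m n)" "real (m n) \<le> 2^n" for n
  proof -
    have x: "0 \<le> s * 2^n / T" "s * 2^n / T \<le> 2^n" using s T by (auto simp: divide_simps)
    then have "real (m n) = of_int \<lfloor>s * 2^n / T\<rfloor>" unfolding m_def by simp
    with x show "real (m n) \<le> s * 2^n / T" "s * 2^n / T - 1 \<le> real (m n)" "real (m n) \<le> 2^n"
      by linarith+
  qed
  have "m n \<le> 2^n" for n
    using m(3)[of n] by (metis of_nat_le_iff of_nat_numeral of_nat_power)
  moreover have "(\<lambda>n. real (m n) * T / 2^n) \<longlonglongrightarrow> s"
  proof -
    have close: "\<bar>real (m n) * T / 2^n - s\<bar> \<le> T / 2^n" for n
    proof -
      have "real (m n) * T / 2^n \<le> s" using m(1)[of n] T by (simp add: field_simps)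
      moreover have "(s * 2^n / T - 1) * T / 2^n \<le> real (m n) * T / 2^n"
        using m(2)[of n] T by (intro divide_right_mono mult_right_mono) auto
      moreover have "(s * 2^n / T - 1) * T / 2^n = s - T / 2^n" using T by (simp add: field_simps)
      moreover have "0 < T / 2^n" using T by simp
      ultimately show ?thesis unfolding abs_le_iff by linarith
    qed
    have "(\<lambda>n. T / 2^n) \<longlonglongrightarrow> 0"
      by (intro tendsto_divide_0[OF tendsto_const]) (simp add: filterlim_realpow_sequentially_gt1)
    then have "(\<lambda>n. real (m n) * T / 2^n - s) \<longlonglongrightarrow> 0"
      by (rule Lim_null_comparison[rotated]) (use close in auto)
    then show ?thesis by (simp add: LIM_zero_iff)
  qed
  ultimately show thesis using that by blast
qed

lemma chaining_bound:
  fixes f :: "real \<Rightarrow> real"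
  assumes cont: "continuous_on {0..T} f" and T: "0 < T" and f0: "f 0 = 0"
    and a: "0 \<le> a" and \<beta>: "0 \<le> \<beta>" "\<beta> < 1"
    and incr: "\<And>N j. j < 2^N \<Longrightarrow> \<bar>f (real (Suc j) * T / 2^N) - f (real j * T / 2^N)\<bar> \<le> \<beta>^N * a"
    and s: "s \<in> {0..T}"
  shows "\<bar>f s\<bar> \<le> a / (1 - \<beta>)"
proof -
  have dyadic_le: "\<bar>f (real m * T / 2^n)\<bar> \<le> a / (1 - \<beta>)" if "m \<le> 2^n" for m n
  proof -
    have "\<bar>f (real m * T / 2^n)\<bar> \<le> a * (\<Sum>N\<le>n. \<beta>^N)"
      by (rule dyadic_chaining[OF f0 a \<beta>(1) incr that])
    also have "\<dots> \<le> a * (\<Sum>N. \<beta>^N)"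
      using \<beta> by (intro mult_left_mono a sum_le_suminf summable_geometric) auto
    also have "\<dots> = a / (1 - \<beta>)" using \<beta> by (simp add: suminf_geometric divide_inverse)
    finally show ?thesis .
  qed
  obtain m where m: "\<And>n. m n \<le> 2^n" and lim: "(\<lambda>n. real (m n) * T / 2^n) \<longlonglongrightarrow> s"
    using dyadic_approximation[OF T s] by blast
  have "real (m n) * T / 2^n \<in> {0..T}" for n
  proof -
    have "real (m n) \<le> 2^n" using m[of n] by (metis of_nat_le_iff of_nat_numeral of_nat_power)
    then show ?thesis using T by (auto simp: divide_simps)
  qed
  then have "(\<lambda>n. f (real (m n) * T / 2^n)) \<longlonglongrightarrow> f s"
    by (intro continuous_on_tendsto_compose[OF cont lim s]) auto
  then have "(\<lambda>n. \<bar>f (real (m n) * T / 2^n)\<bar>) \<longlonglongrightarrow> \<bar>f s\<bar>" by (rule tendsto_rabs)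
  then show ?thesis
    by (rule LIMSEQ_le_const2) (use dyadic_le m in auto)
qed

section \<open>Moments of the supremum of the process\<close>

lemma brownian_motionD:
  assumes "brownian_motion M W"
  shows "prob_space M" and "W t \<in> borel_measurable M"
    and "\<omega> \<in> space M \<Longrightarrow> W 0 \<omega> = 0"
    and "\<omega> \<in> space M \<Longrightarrow> continuous_on {0..T} (\<lambda>t. W t \<omega>)"
    and "0 \<le> s \<Longrightarrow> s < t \<Longrightarrow>
      distributed M lborel (\<lambda>\<omega>. W t \<omega> - W s \<omega>) (\<lambda>x. ennreal (normal_density 0 (sqrt (t - s)) x))"
proof -
  show "\<omega> \<in> space M \<Longrightarrow> continuous_on {0..T} (\<lambda>t. W t \<omega>)"
    using assms unfolding brownian_motion_def
    by (metis atLeastAtMost_iff atLeast_iff continuous_on_subset subsetI)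
qed (use assms in \<open>auto simp: brownian_motion_def\<close>)

lemma nn_integral_bm_increment_power_le:
  assumes bm: "brownian_motion M W" and st: "0 \<le> s" "s < t"
  shows "(\<integral>\<^sup>+ \<omega>. ennreal ((W t \<omega> - W s \<omega>)^(2*m)) \<partial>M) \<le> ennreal ((2 * (t - s))^m * fact m)"
proof -
  have sigma: "0 < sqrt (t - s)" "(sqrt (t - s))\<^sup>2 = t - s" using st by simp_all
  have "(\<integral>\<^sup>+ \<omega>. ennreal ((W t \<omega> - W s \<omega>)^(2*m)) \<partial>M)
      = (\<integral>\<^sup>+ x. ennreal (normal_density 0 (sqrt (t - s)) x) * ennreal (x^(2*m)) \<partial>lborel)"
    by (rule distributed_nn_integral[OF brownian_motionD(5)[OF bm st], symmetric]) simp
  also have "\<dots> = (\<integral>\<^sup>+ x. ennreal (normal_density 0 (sqrt (t - s)) x * (x - 0)^(2*m)) \<partial>lborel)"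
    by (intro nn_integral_cong) (simp add: ennreal_mult' normal_density_nonneg)
  also have "\<dots> = ennreal (integral\<^sup>L lborel (\<lambda>x. normal_density 0 (sqrt (t - s)) x * (x - 0)^(2*m)))"
    by (rule nn_integral_eq_integral[OF integrable_normal_moment])
       (use st in \<open>auto simp: zero_le_even_power\<close>)
  also have "\<dots> = ennreal (fact (2*m) / ((2 / (sqrt (t - s))\<^sup>2)^m * fact m))"
    using has_bochner_integral_integral_eq[OF normal_moment_even[where k=m and \<mu>=0, OF sigma(1)]]
    by simp
  also have "fact (2*m) / ((2 / (sqrt (t - s))\<^sup>2)^m * fact m) = (t - s)^m * (fact (2*m) / (2^m * fact m))"
    using st by (simp add: sigma(2) power_divide)
  also have "\<dots> \<le> ennreal ((t - s)^m * (4^m * fact m * fact m / (2^m * fact m)))"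
    using fact_add_le[of m m] st
    by (intro ennreal_leI mult_left_mono divide_right_mono)
       (auto simp: mult_2 power_add power_mult_distrib[symmetric])
  also have "(t - s)^m * (4^m * fact m * fact m / (2^m * fact m)) = (2 * (t - s))^m * fact m"
  proof -
    have "(4::real)^m = 2^m * 2^m" by (simp flip: power_mult_distrib)
    then show ?thesis unfolding power_mult_distrib[of 2 "t - s"] by simp
  qed
  finally show ?thesis .
qed

definition dyadic_increment :: "(real \<Rightarrow> 'a \<Rightarrow> real) \<Rightarrow> real \<Rightarrow> nat \<Rightarrow> nat \<Rightarrow> 'a \<Rightarrow> real" where
  "dyadic_increment W T N j \<omega> = W (real (Suc j) * T / 2^N) \<omega> - W (real j * T / 2^N) \<omega>"

text \<open>The weight \<open>(64/49)^(N*m) = ((8/7)^N)^(2*m)\<close> is chosen so that a bound \<open>u\<close> on the sum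
  forces the increments of level \<open>N\<close> to be at most \<open>(7/8)^N * u^(1/(2*m))\<close>; chaining then
  bounds the path by \<open>8 * u^(1/(2*m))\<close>, while for \<open>m \<ge> 2\<close> the expected level sums still
  decay geometrically.\<close>
definition chaining_level :: "(real \<Rightarrow> 'a \<Rightarrow> real) \<Rightarrow> real \<Rightarrow> nat \<Rightarrow> nat \<Rightarrow> 'a \<Rightarrow> ennreal" where
  "chaining_level W T m N \<omega> =
    (\<Sum>j<2^N. ennreal ((64/49)^(N*m) * (dyadic_increment W T N j \<omega>)^(2*m)))"

definition chaining_sum :: "(real \<Rightarrow> 'a \<Rightarrow> real) \<Rightarrow> real \<Rightarrow> nat \<Rightarrow> 'a \<Rightarrow> ennreal" where
  "chaining_sum W T m \<omega> = (\<Sum>N. chaining_level W T m N \<omega>)"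

lemma borel_measurable_chaining_level[measurable]:
  assumes "\<And>t. W t \<in> borel_measurable M"
  shows "chaining_level W T m N \<in> borel_measurable M"
proof -
  have [measurable]: "W t \<in> borel_measurable M" for t by (rule assms)
  show ?thesis unfolding chaining_level_def dyadic_increment_def by measurable
qed

lemma borel_measurable_chaining_sum[measurable]:
  assumes "\<And>t. W t \<in> borel_measurable M"
  shows "chaining_sum W T m \<in> borel_measurable M"
  unfolding chaining_sum_def using assms by measurable

lemma nn_integral_chaining_level_le:
  assumes bm: "brownian_motion M W" and T: "0 < T"
  shows "(\<integral>\<^sup>+ \<omega>. chaining_level W T m N \<omega> \<partial>M) \<le> ennreal ((2*T)^m * fact m * (2 * (32/49)^m)^N)"
proof -
  have [measurable]: "W t \<in> borel_measurable M" for t by (rule brownian_motionD(2)[OF bm])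
  have incr_le: "(\<integral>\<^sup>+ \<omega>. ennreal ((dyadic_increment W T N j \<omega>)^(2*m)) \<partial>M)
      \<le> ennreal ((2 * (T / 2^N))^m * fact m)" for j
  proof -
    have "real (Suc j) * T / 2^N - real j * T / 2^N = T / 2^N" by (simp add: field_simps)
    moreover have "0 \<le> real j * T / 2^N" "real j * T / 2^N < real (Suc j) * T / 2^N"
      using T by (auto simp: divide_simps)
    ultimately show ?thesis
      unfolding dyadic_increment_def using nn_integral_bm_increment_power_le[OF bm] by metis
  qed
  have "(\<integral>\<^sup>+ \<omega>. chaining_level W T m N \<omega> \<partial>M)
      = (\<Sum>j<(2::nat)^N. ennreal ((64/49)^(N*m)) * (\<integral>\<^sup>+ \<omega>. ennreal ((dyadic_increment W T N j \<omega>)^(2*m)) \<partial>M))"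
    unfolding chaining_level_def dyadic_increment_def
    by (subst nn_integral_sum) (auto simp: ennreal_mult zero_le_even_power nn_integral_cmult)
  also have "\<dots> \<le> (\<Sum>j<(2::nat)^N. ennreal ((64/49)^(N*m)) * ennreal ((2 * (T / 2^N))^m * fact m))"
    by (intro sum_mono mult_left_mono incr_le) auto
  also have "\<dots> = ennreal (2^N * ((64/49)^(N*m) * ((2 * (T / 2^N))^m * fact m)))"
    using T by (simp add: ennreal_mult ennreal_of_nat_eq_real_of_nat)
  also have "2^N * ((64/49)^(N*m) * ((2 * (T / 2^N))^m * fact m)) = (2*T)^m * fact m * (2 * (32/49)^m)^N"
  proof -
    have scale: "(2 * (T / 2^N))^m = (2*T)^m / (2^m)^N"
      by (simp add: power_divide mult.commute[of N] flip: power_mult)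
    have "(64/49::real)^(N*m) / (2^m)^N = ((64/49)^m / 2^m)^N"
      by (simp add: power_divide mult.commute[of N] power_mult power_mult_distrib)
    also have "(64/49::real)^m / 2^m = (32/49)^m" by (simp add: power_divide[symmetric])
    finally have ratio: "(64/49::real)^(N*m) / (2^m)^N = ((32/49)^m)^N" .
    have "2^N * ((64/49)^(N*m) * ((2 * (T / 2^N))^m * fact m))
        = (2*T)^m * fact m * (2^N * ((64/49)^(N*m) / (2^m)^N))"
      unfolding scale by simp
    also have "\<dots> = (2*T)^m * fact m * (2 * (32/49)^m)^N"
      unfolding ratio by (simp add: power_mult_distrib)
    finally show ?thesis .
  qed
  finally show ?thesis .
qed

lemma nn_integral_chaining_sum_le:
  assumes bm: "brownian_motion M W" and T: "0 < T" and m: "2 \<le> m"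
  shows "(\<integral>\<^sup>+ \<omega>. chaining_sum W T m \<omega> \<partial>M) \<le> ennreal (7 * (2*T)^m * fact m)"
proof -
  have [measurable]: "W t \<in> borel_measurable M" for t by (rule brownian_motionD(2)[OF bm])
  define A :: real where "A = (2*T)^m * fact m"
  have A: "0 \<le> A" unfolding A_def using T by simp
  have ratio: "2 * (32/49::real)^m \<le> 2048/2401"
    using power_decreasing[OF m, of "32/49::real"] by (simp add: power2_eq_square)
  have "(\<integral>\<^sup>+ \<omega>. chaining_sum W T m \<omega> \<partial>M) = (\<Sum>N. \<integral>\<^sup>+ \<omega>. chaining_level W T m N \<omega> \<partial>M)"
    unfolding chaining_sum_def by (rule nn_integral_suminf) measurable
  also have "\<dots> \<le> (\<Sum>N. ennreal (A * (2048/2401)^N))"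
  proof (intro suminf_le summableI)
    fix N
    have "A * (2 * (32/49)^m)^N \<le> A * (2048/2401)^N"
      using A ratio by (intro mult_left_mono power_mono) auto
    then show "(\<integral>\<^sup>+ \<omega>. chaining_level W T m N \<omega> \<partial>M) \<le> ennreal (A * (2048/2401)^N)"
      using nn_integral_chaining_level_le[OF bm T, of m N] unfolding A_def
      by (meson ennreal_leI order.trans)
  qed
  also have "\<dots> = ennreal (A * (1 / (1 - 2048/2401)))"
  proof (rule suminf_ennreal_eq)
    show "(\<lambda>N. A * (2048/2401) ^ N) sums (A * (1 / (1 - 2048/2401)))"
      by (rule sums_mult[OF geometric_sums]) simp
  qed (use A in simp_all)
  also have "\<dots> \<le> ennreal (7 * (2*T)^m * fact m)"
    using A T unfolding A_def by (intro ennreal_leI) (simp add: mult_right_mono)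
  finally show ?thesis .
qed

lemma dyadic_increment_le_chaining_sum:
  assumes u: "chaining_sum W T m \<omega> = ennreal u" "0 \<le> u" and m: "1 \<le> m" and j: "j < 2^N"
  shows "\<bar>dyadic_increment W T N j \<omega>\<bar> \<le> (7/8)^N * root (2*m) u"
proof -
  define z where "z = (8/7)^N * \<bar>dyadic_increment W T N j \<omega>\<bar>"
  have "ennreal ((64/49)^(N*m) * (dyadic_increment W T N j \<omega>)^(2*m)) \<le> chaining_level W T m N \<omega>"
    unfolding chaining_level_def by (rule member_le_sum) (use j in auto)
  also have "\<dots> \<le> chaining_sum W T m \<omega>"
    unfolding chaining_sum_def using sum_le_suminf[OF summableI, of "{N}"] by simp
  finally have "(64/49)^(N*m) * (dyadic_increment W T N j \<omega>)^(2*m) \<le> u"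
    using u by (simp add: ennreal_le_iff)
  moreover have "z^(2*m) = (64/49)^(N*m) * (dyadic_increment W T N j \<omega>)^(2*m)"
  proof -
    have "((8/7::real)^N)^(2*m) = ((8/7)^2)^(N*m)"
      by (simp add: power_mult[symmetric] ac_simps)
    moreover have "\<bar>dyadic_increment W T N j \<omega>\<bar>^(2*m) = (dyadic_increment W T N j \<omega>)^(2*m)"
      by (simp add: power_mult power_even_abs)
    ultimately show ?thesis
      unfolding z_def power_mult_distrib by (simp add: power2_eq_square)
  qed
  ultimately have "root (2*m) (z^(2*m)) \<le> root (2*m) u"
    using m by (simp add: real_root_le_iff)
  then have "z \<le> root (2*m) u"
    using m by (simp add: real_root_power_cancel z_def)
  then have "(7/8)^N * z \<le> (7/8)^N * root (2*m) u" by (intro mult_left_mono) auto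
  moreover have "(7/8)^N * z = \<bar>dyadic_increment W T N j \<omega>\<bar>"
    unfolding z_def by (simp add: power_mult_distrib[symmetric])
  ultimately show ?thesis by simp
qed

lemma sup_abs_pow_le_chaining_sum:
  assumes bm: "brownian_motion M W" and T: "0 < T" and \<omega>: "\<omega> \<in> space M" and m: "1 \<le> m"
  shows "ennreal ((SUP s\<in>{0..T}. \<bar>W s \<omega>\<bar>)^(2*m)) \<le> ennreal (8^(2*m)) * chaining_sum W T m \<omega>"
proof (cases "chaining_sum W T m \<omega> = top")
  case False
  define u where "u = enn2real (chaining_sum W T m \<omega>)"
  have u: "chaining_sum W T m \<omega> = ennreal u" "0 \<le> u"
    unfolding u_def using False by (simp_all add: less_top)
  note paths = brownian_motionD(4)[OF bm \<omega>, of T]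
  have "\<bar>W s \<omega>\<bar> \<le> root (2*m) u / (1 - 7/8)" if "s \<in> {0..T}" for s
    using dyadic_increment_le_chaining_sum[OF u m] u(2) that
    by (intro chaining_bound[OF paths T brownian_motionD(3)[OF bm \<omega>]])
       (auto simp: dyadic_increment_def real_root_ge_zero)
  then have "(SUP s\<in>{0..T}. \<bar>W s \<omega>\<bar>) \<le> 8 * root (2*m) u"
    by (intro cSUP_least) (use T in \<open>auto simp: mult.commute\<close>)
  moreover have "0 \<le> (SUP s\<in>{0..T}. \<bar>W s \<omega>\<bar>)"
    using T by (intro SUP_abs_nonneg[OF paths]) simp
  ultimately have "(SUP s\<in>{0..T}. \<bar>W s \<omega>\<bar>)^(2*m) \<le> (8 * root (2*m) u)^(2*m)"
    by (intro power_mono) auto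
  also have "\<dots> = 8^(2*m) * u" using m u(2) by (simp add: power_mult_distrib)
  finally show ?thesis
    unfolding u(1) using u(2) by (simp add: ennreal_mult[symmetric] ennreal_leI)
qed (simp add: ennreal_mult_top)

lemma power_le_1_plus_power:
  fixes x :: real
  assumes "0 \<le> x" "k \<le> n"
  shows "x^k \<le> 1 + x^n"
proof (cases "x \<le> 1")
  case True
  then have "x^k \<le> 1" using assms(1) by (rule power_le_one[rotated])
  then show ?thesis using zero_le_power[OF assms(1), of n] by linarith
next
  case False
  then have "x^k \<le> x^n" using assms(2) by (intro power_increasing) auto
  then show ?thesis by simp
qed

text \<open>The exponent \<open>m = k div 2 + 2\<close> satisfies \<open>k \<le> 2*m\<close>, so that \<open>x^k \<le> 1 + x^(2*m)\<close>, and
  \<open>m \<ge> 2\<close>, which the bound on the expected chaining sum requires.\<close>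
definition OU_majorant :: "(nat \<Rightarrow> real) \<Rightarrow> real \<Rightarrow> (real \<Rightarrow> 'a \<Rightarrow> real) \<Rightarrow> real \<Rightarrow> 'a \<Rightarrow> ennreal" where
  "OU_majorant q K W T \<omega> = (\<Sum>k. ennreal (\<bar>q k\<bar> * K^k) *
     (1 + ennreal (8^(2*(k div 2 + 2))) * chaining_sum W T (k div 2 + 2) \<omega>))"

lemma borel_measurable_OU_majorant[measurable]:
  assumes "\<And>t. W t \<in> borel_measurable M"
  shows "OU_majorant q K W T \<in> borel_measurable M"
proof -
  have [measurable]: "W t \<in> borel_measurable M" for t by (rule assms)
  show ?thesis unfolding OU_majorant_def by measurable
qed

lemma ps_abs_OU_sup_le_majorant:
  assumes bm: "brownian_motion M W" and T: "0 < T" and \<omega>: "\<omega> \<in> space M"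
    and q: "negligible_half_fact q"
  shows "ennreal (ps_abs q (OU_sup b c W T \<omega>)) \<le> OU_majorant q (\<bar>c\<bar> * (1 + \<bar>b\<bar>*T*exp(\<bar>b\<bar>*T))) W T \<omega>"
proof -
  define K where "K = \<bar>c\<bar> * (1 + \<bar>b\<bar>*T*exp(\<bar>b\<bar>*T))"
  define S where "S = (SUP s\<in>{0..T}. \<bar>W s \<omega>\<bar>)"
  note paths = brownian_motionD(4)[OF bm \<omega>, of T]
  have K: "0 \<le> K" unfolding K_def using T by simp
  have S: "0 \<le> S"
    unfolding S_def using T by (intro SUP_abs_nonneg[OF paths]) simp
  have "ps_abs q (OU_sup b c W T \<omega>) \<le> ps_abs q (K * S)"
    using OU_sup_bounds[where W=W and \<omega>=\<omega> and b=b and c=c, OF paths] T q unfolding K_def S_def by (intro ps_abs_mono) auto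
  then have "ennreal (ps_abs q (OU_sup b c W T \<omega>)) \<le> (\<Sum>k. ennreal (\<bar>q k\<bar> * (K * S)^k))"
    unfolding ps_abs_def
    by (subst suminf_ennreal2) (use K S summable_ps_abs[OF q] in \<open>auto intro: ennreal_leI\<close>)
  also have "\<dots> \<le> OU_majorant q K W T \<omega>"
    unfolding OU_majorant_def
  proof (intro suminf_le summableI)
    fix k
    have "ennreal (S^k) \<le> ennreal (1 + S^(2*(k div 2 + 2)))"
      using power_le_1_plus_power[OF S, of k "2*(k div 2 + 2)"] by (intro ennreal_leI) auto
    also have "\<dots> = 1 + ennreal (S^(2*(k div 2 + 2)))" using S by simp
    also have "\<dots> \<le> 1 + ennreal (8^(2*(k div 2 + 2))) * chaining_sum W T (k div 2 + 2) \<omega>"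
      unfolding S_def by (intro add_left_mono sup_abs_pow_le_chaining_sum[OF bm T \<omega>]) auto
    finally show "ennreal (\<bar>q k\<bar> * (K * S)^k) \<le> ennreal (\<bar>q k\<bar> * K^k) *
        (1 + ennreal (8^(2*(k div 2 + 2))) * chaining_sum W T (k div 2 + 2) \<omega>)"
      using K S by (simp add: ennreal_mult power_mult_distrib mult.assoc mult_left_mono)
  qed
  finally show ?thesis unfolding K_def .
qed

lemma summable_half_fact_shifted:
  assumes q: "negligible_half_fact q" and A: "0 \<le> A" and D: "0 \<le> D"
  shows "summable (\<lambda>k. \<bar>q k\<bar> * A^k * (D^(k div 2 + 2) * fact (k div 2 + 2)))"
proof -
  define L where "L = max 1 D"
  have L: "1 \<le> L" "D \<le> L" unfolding L_def by simp_all
  have bound: "norm (\<bar>q k\<bar> * A^k * (D^(k div 2 + 2) * fact (k div 2 + 2)))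
      \<le> (8 * L^2) * (\<bar>q k\<bar> * fact (k div 2) * (2*L*A)^k)" for k
  proof -
    have "D^(k div 2 + 2) \<le> L^(k + 2)"
      using L D by (intro order.trans[OF power_mono power_increasing]) auto
    moreover have "(fact (k div 2 + 2) :: real) \<le> 8 * 2^k * fact (k div 2)"
    proof -
      have "(fact (k div 2 + 2) :: real) \<le> 2^(k div 2 + 2) * fact (k div 2) * fact 2"
        by (rule fact_add_le)
      also have "\<dots> \<le> 2^(k + 2) * fact (k div 2) * 2"
        using power_increasing[of "k div 2 + 2" "k + 2" "2::real"] by (simp add: mult_right_mono)
      finally show ?thesis by (simp add: power_add)
    qed
    ultimately have "D^(k div 2 + 2) * fact (k div 2 + 2) \<le> L^(k + 2) * (8 * 2^k * fact (k div 2))"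
      using D L by (intro mult_mono) auto
    then have "\<bar>q k\<bar> * A^k * (D^(k div 2 + 2) * fact (k div 2 + 2))
        \<le> \<bar>q k\<bar> * A^k * (L^(k + 2) * (8 * 2^k * fact (k div 2)))"
      using A by (intro mult_left_mono) auto
    then show ?thesis
      using A D by (simp add: power_add power_mult_distrib power2_eq_square ac_simps)
  qed
  have "summable (\<lambda>k. \<bar>q k\<bar> * fact (k div 2) * (2*L*A)^k)"
    using A L by (intro summable_half_fact_weighted[OF q]) auto
  then show ?thesis
    by (rule summable_comparison_test'[OF summable_mult[of _ "8 * L^2"]]) (use bound in auto)
qed

lemma nn_integral_OU_majorant_term_le:
  assumes bm: "brownian_motion M W" and T: "0 < T" and n: "2 \<le> n" and a: "0 \<le> a"
  shows "(\<integral>\<^sup>+ \<omega>. ennreal a * (1 + ennreal (8^(2*n)) * chaining_sum W T n \<omega>) \<partial>M)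
    \<le> ennreal (a * (1 + 7 * ((128*T)^n * fact n)))"
proof -
  interpret prob_space M by (rule brownian_motionD(1)[OF bm])
  have [measurable]: "W t \<in> borel_measurable M" for t by (rule brownian_motionD(2)[OF bm])
  define B where "B = 7 * ((128*T)^n * fact n)"
  have B: "0 \<le> B" unfolding B_def using T by simp
  have "(8::real)^(2*n) * (2*T)^n = (64 * (2*T))^n"
    unfolding power_mult_distrib[of "64::real" "2*T"] by (simp add: power_mult)
  also have "64 * (2*T) = 128 * T" by simp
  finally have "(8::real)^(2*n) * (7 * (2*T)^n * fact n) = B"
    unfolding B_def by (metis mult.assoc mult.left_commute)
  then have scale: "ennreal (8^(2*n)) * ennreal (7 * (2*T)^n * fact n) = ennreal B"
    by (metis ennreal_mult' zero_le_numeral zero_le_power)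
  have "(\<integral>\<^sup>+ \<omega>. ennreal a * (1 + ennreal (8^(2*n)) * chaining_sum W T n \<omega>) \<partial>M)
      = ennreal a * (1 + ennreal (8^(2*n)) * (\<integral>\<^sup>+ \<omega>. chaining_sum W T n \<omega> \<partial>M))"
    by (simp add: nn_integral_cmult nn_integral_add emeasure_space_1)
  also have "\<dots> \<le> ennreal a * (1 + ennreal (8^(2*n)) * ennreal (7 * (2*T)^n * fact n))"
    by (intro mult_left_mono add_left_mono nn_integral_chaining_sum_le[OF bm T n]) auto
  also have "\<dots> = ennreal (a * (1 + B))"
    unfolding scale using a B by (simp add: ennreal_mult)
  finally show ?thesis unfolding B_def .
qed

lemma nn_integral_OU_majorant_finite:
  assumes bm: "brownian_motion M W" and T: "0 < T" and q: "negligible_half_fact q" and K: "0 \<le> K"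
  shows "(\<integral>\<^sup>+ \<omega>. OU_majorant q K W T \<omega> \<partial>M) < \<infinity>"
proof -
  have [measurable]: "W t \<in> borel_measurable M" for t by (rule brownian_motionD(2)[OF bm])
  define a where "a k = \<bar>q k\<bar> * K^k * (1 + 7 * ((128*T)^(k div 2 + 2) * fact (k div 2 + 2)))" for k
  have a: "0 \<le> a k" for k unfolding a_def using K T by simp
  have "summable (\<lambda>k. \<bar>q k\<bar> * K^k +
      7 * (\<bar>q k\<bar> * K^k * ((128*T)^(k div 2 + 2) * fact (k div 2 + 2))))"
    using T K by (intro summable_add summable_mult summable_ps_abs[OF q] summable_half_fact_shifted[OF q]) auto
  then have "summable a" unfolding a_def by (simp add: algebra_simps)
  have "(\<integral>\<^sup>+ \<omega>. OU_majorant q K W T \<omega> \<partial>M) = (\<Sum>k. \<integral>\<^sup>+ \<omega>. ennreal (\<bar>q k\<bar> * K^k) *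
      (1 + ennreal (8^(2*(k div 2 + 2))) * chaining_sum W T (k div 2 + 2) \<omega>) \<partial>M)"
    unfolding OU_majorant_def by (rule nn_integral_suminf) measurable
  also have "\<dots> \<le> (\<Sum>k. ennreal (a k))"
    unfolding a_def using K T by (intro suminf_le summableI nn_integral_OU_majorant_term_le[OF bm T]) auto
  also have "\<dots> < \<infinity>"
    using ennreal_suminf_neq_top[OF \<open>summable a\<close> a] by (simp add: less_top)
  finally show ?thesis .
qed

lemma nn_integral_ps_abs_OU_sup_finite:
  assumes bm: "brownian_motion M W" and T: "0 < T" and q: "negligible_dfact q"
  shows "(\<integral>\<^sup>+ \<omega>. ennreal (ps_abs q (OU_sup b c W T \<omega>)) \<partial>M) < \<infinity>"
proof -
  have q: "negligible_half_fact q" using q by (simp add: negligible_dfact_iff)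
  have "(\<integral>\<^sup>+ \<omega>. ennreal (ps_abs q (OU_sup b c W T \<omega>)) \<partial>M)
      \<le> (\<integral>\<^sup>+ \<omega>. OU_majorant q (\<bar>c\<bar> * (1 + \<bar>b\<bar>*T*exp(\<bar>b\<bar>*T))) W T \<omega> \<partial>M)"
    by (intro nn_integral_mono ps_abs_OU_sup_le_majorant[OF bm T _ q])
  also have "\<dots> < \<infinity>"
    using T by (intro nn_integral_OU_majorant_finite[OF bm T q]) simp
  finally show ?thesis .
qed

lemma estimable_nn_integral_le:
  assumes bm: "brownian_motion M W" and T: "0 < T" and F: "estimable M b c W T F"
  shows "\<exists>q C. negligible_dfact q \<and>
    (\<forall>t\<in>{0..T}. \<forall>x. (\<integral>\<^sup>+ \<omega>. ennreal \<bar>F t x \<omega>\<bar> \<partial>M) \<le> ennreal (ps_abs q \<bar>x\<bar> + C))"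
proof -
  interpret prob_space M by (rule brownian_motionD(1)[OF bm])
  have [measurable]: "W t \<in> borel_measurable M" for t by (rule brownian_motionD(2)[OF bm])
  obtain r where r: "negligible_half_fact r" and F: "\<And>t x. t \<in> {0..T} \<Longrightarrow>
      AE \<omega> in M. \<bar>F t x \<omega>\<bar> \<le> ps_abs r \<bar>x\<bar> + ps_abs r (OU_sup b c W T \<omega>)"
    using F by (rule estimableE) blast
  define H where "H = OU_majorant r (\<bar>c\<bar> * (1 + \<bar>b\<bar>*T*exp(\<bar>b\<bar>*T))) W T"
  define C where "C = enn2real (\<integral>\<^sup>+ \<omega>. H \<omega> \<partial>M)"
  have C: "(\<integral>\<^sup>+ \<omega>. H \<omega> \<partial>M) = ennreal C" "0 \<le> C"
    using nn_integral_OU_majorant_finite[OF bm T r, of "\<bar>c\<bar> * (1 + \<bar>b\<bar>*T*exp(\<bar>b\<bar>*T))"] T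
    unfolding C_def H_def by (simp_all add: less_top)
  show ?thesis
  proof (intro exI conjI ballI allI)
    show "negligible_dfact r" using r by (simp add: negligible_dfact_iff)
    fix t x assume t: "t \<in> {0..T}"
    have r_x: "0 \<le> ps_abs r \<bar>x\<bar>" by (rule ps_abs_nonneg[OF r]) simp
    have "AE \<omega> in M. ennreal \<bar>F t x \<omega>\<bar> \<le> ennreal (ps_abs r \<bar>x\<bar>) + H \<omega>"
      using F[OF t, of x] AE_space
    proof eventually_elim
      case (elim \<omega>)
      have "0 \<le> OU_sup b c W T \<omega>"
        using T by (intro OU_sup_bounds(1) brownian_motionD(4)[OF bm elim(2)]) simp
      then have "ennreal \<bar>F t x \<omega>\<bar> \<le> ennreal (ps_abs r \<bar>x\<bar>) + ennreal (ps_abs r (OU_sup b c W T \<omega>))"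
        using elim(1) r_x ps_abs_nonneg[OF r] by (simp add: ennreal_leI flip: ennreal_plus)
      also have "\<dots> \<le> ennreal (ps_abs r \<bar>x\<bar>) + H \<omega>"
        unfolding H_def by (intro add_left_mono ps_abs_OU_sup_le_majorant[OF bm T elim(2) r])
      finally show ?case .
    qed
    then have "(\<integral>\<^sup>+ \<omega>. ennreal \<bar>F t x \<omega>\<bar> \<partial>M) \<le> (\<integral>\<^sup>+ \<omega>. ennreal (ps_abs r \<bar>x\<bar>) + H \<omega> \<partial>M)"
      by (rule nn_integral_mono_AE)
    also have "\<dots> = ennreal (ps_abs r \<bar>x\<bar>) + (\<integral>\<^sup>+ \<omega>. H \<omega> \<partial>M)"
      unfolding H_def by (simp add: nn_integral_add emeasure_space_1)
    also have "\<dots> = ennreal (ps_abs r \<bar>x\<bar> + C)" using C r_x by simp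
    finally show "(\<integral>\<^sup>+ \<omega>. ennreal \<bar>F t x \<omega>\<bar> \<partial>M) \<le> ennreal (ps_abs r \<bar>x\<bar> + C)" .
  qed
qed

theorem lemma6p6:
  fixes M :: "'a measure" and W :: "real \<Rightarrow> 'a \<Rightarrow> real" and b c T :: real
  assumes "brownian_motion M W" and "c \<noteq> 0" and "T > 0"
  shows "(\<forall>F G. estimable M b c W T F \<and> estimable M b c W T G \<longrightarrow>
             estimable M b c W T (\<lambda>t x \<omega>. F t x \<omega> + G t x \<omega>) \<and>
             estimable M b c W T (\<lambda>t x \<omega>. F t x \<omega> * G t x \<omega>))
       \<and> (\<forall>q. negligible_dfact q \<longrightarrow>
             (\<integral>\<^sup>+ \<omega>. ennreal (ps_abs q (OU_sup b c W T \<omega>)) \<partial>M) < \<infinity>)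
       \<and> (\<forall>F. estimable M b c W T F \<longrightarrow>
             (\<exists>q C. negligible_dfact q \<and>
                (\<forall>t\<in>{0..T}. \<forall>x. (\<integral>\<^sup>+ \<omega>. ennreal \<bar>F t x \<omega>\<bar> \<partial>M) \<le> ennreal (ps_abs q \<bar>x\<bar> + C))))"
proof (intro conjI allI impI; (elim conjE)?)
  fix F G assume "estimable M b c W T F" "estimable M b c W T G"
  then show "estimable M b c W T (\<lambda>t x \<omega>. F t x \<omega> + G t x \<omega>)"
    and "estimable M b c W T (\<lambda>t x \<omega>. F t x \<omega> * G t x \<omega>)"
    by (rule estimable_add, rule estimable_mult)
next
  fix q assume "negligible_dfact q"
  then show "(\<integral>\<^sup>+ \<omega>. ennreal (ps_abs q (OU_sup b c W T \<omega>)) \<partial>M) < \<infinity>"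
    by (rule nn_integral_ps_abs_OU_sup_finite[OF assms(1,3)])
next
  fix F assume "estimable M b c W T F"
  then show "\<exists>q C. negligible_dfact q \<and>
      (\<forall>t\<in>{0..T}. \<forall>x. (\<integral>\<^sup>+ \<omega>. ennreal \<bar>F t x \<omega>\<bar> \<partial>M) \<le> ennreal (ps_abs q \<bar>x\<bar> + C))"
    by (rule estimable_nn_integral_le[OF assms(1,3)])
qed

end
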